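(* Let $n\geq 1$. For every real $r\geq 2$, the Vietoris--Rips complex $\mathrm{VR}(\mathbb{Z}^n;r)$ is simply connected.
   Context: $\mathbb{Z}^n$ is equipped with the Manhattan metric $d(x,y)=\sum_{i=1}^n |x_i-y_i|$. For a metric space $X$ and $r\geq 0$, $\mathrm{VR}(X;r)$ is the simplicial complex with vertex set $X$ whose simplices are the finite subsets of $X$ of diameter at most $r$. *)

theory Defs
  imports "HOL-Analysis.Analysis"
begin

definition manhattan :: "int ^ 'n \<Rightarrow> int ^ 'n \<Rightarrow> real" where
  "manhattan x y = (\<Sum>i\<in>UNIV. real_of_int \<bar>x $ i - y $ i\<bar>)"

definition VR_complex :: "('a \<Rightarrow> 'a \<Rightarrow> real) \<Rightarrow> 'a set \<Rightarrow> real \<Rightarrow> 'a set set" where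
  "VR_complex d X r = {\<sigma>. \<sigma> \<subseteq> X \<and> finite \<sigma> \<and> \<sigma> \<noteq> {} \<and> (\<forall>x\<in>\<sigma>. \<forall>y\<in>\<sigma>. d x y \<le> r)}"

text \<open>Closed geometric simplex spanned by a finite vertex set, in barycentric coordinates.\<close>
definition closed_simplex :: "'a set \<Rightarrow> ('a \<Rightarrow> real) set" where
  "closed_simplex \<sigma> = {\<alpha>. (\<forall>v. 0 \<le> \<alpha> v) \<and> (\<forall>v. v \<notin> \<sigma> \<longrightarrow> \<alpha> v = 0) \<and> sum \<alpha> \<sigma> = 1}"

text \<open>Geometric realization of an abstract simplicial complex K (given by its set of
  simplices), with the usual weak (coherent) topology: a set is open iff its
  intersection with every closed simplex is open in that simplex (Euclidean topology).\<close>
definition realization_carrier :: "'a set set \<Rightarrow> ('a \<Rightarrow> real) set" where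
  "realization_carrier K = (\<Union>\<sigma>\<in>K. closed_simplex \<sigma>)"

definition realization :: "'a set set \<Rightarrow> ('a \<Rightarrow> real) topology" where
  "realization K = topology (\<lambda>U. U \<subseteq> realization_carrier K \<and>
      (\<forall>\<sigma>\<in>K. openin (top_of_set (closed_simplex \<sigma>)) (U \<inter> closed_simplex \<sigma>)))"

lemma istopology_realization:
  "istopology (\<lambda>U. U \<subseteq> realization_carrier K \<and>
      (\<forall>\<sigma>\<in>K. openin (top_of_set (closed_simplex \<sigma>)) (U \<inter> closed_simplex \<sigma>)))"
  unfolding istopology_def
proof (rule conjI; intro allI impI)
  fix S T assume S: "S \<subseteq> realization_carrier K \<and> (\<forall>\<sigma>\<in>K. openin (top_of_set (closed_simplex \<sigma>)) (S \<inter> closed_simplex \<sigma>))"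
    and T: "T \<subseteq> realization_carrier K \<and> (\<forall>\<sigma>\<in>K. openin (top_of_set (closed_simplex \<sigma>)) (T \<inter> closed_simplex \<sigma>))"
  show "S \<inter> T \<subseteq> realization_carrier K \<and> (\<forall>\<sigma>\<in>K. openin (top_of_set (closed_simplex \<sigma>)) (S \<inter> T \<inter> closed_simplex \<sigma>))"
  proof (intro conjI ballI)
    show "S \<inter> T \<subseteq> realization_carrier K" using S by blast
  next
    fix \<sigma> assume "\<sigma> \<in> K"
    then have "openin (top_of_set (closed_simplex \<sigma>)) ((S \<inter> closed_simplex \<sigma>) \<inter> (T \<inter> closed_simplex \<sigma>))"
      using S T by blast
    moreover have "(S \<inter> closed_simplex \<sigma>) \<inter> (T \<inter> closed_simplex \<sigma>) = S \<inter> T \<inter> closed_simplex \<sigma>" by blast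
    ultimately show "openin (top_of_set (closed_simplex \<sigma>)) (S \<inter> T \<inter> closed_simplex \<sigma>)" by simp
  qed
next
  fix \<K> assume H: "\<forall>U\<in>\<K>. U \<subseteq> realization_carrier K \<and> (\<forall>\<sigma>\<in>K. openin (top_of_set (closed_simplex \<sigma>)) (U \<inter> closed_simplex \<sigma>))"
  show "\<Union>\<K> \<subseteq> realization_carrier K \<and> (\<forall>\<sigma>\<in>K. openin (top_of_set (closed_simplex \<sigma>)) (\<Union>\<K> \<inter> closed_simplex \<sigma>))"
  proof (intro conjI ballI)
    show "\<Union>\<K> \<subseteq> realization_carrier K" using H by blast
  next
    fix \<sigma> assume "\<sigma> \<in> K"
    then have "openin (top_of_set (closed_simplex \<sigma>)) (\<Union>U\<in>\<K>. U \<inter> closed_simplex \<sigma>)"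
      using H by (intro openin_Union) auto
    moreover have "(\<Union>U\<in>\<K>. U \<inter> closed_simplex \<sigma>) = \<Union>\<K> \<inter> closed_simplex \<sigma>" by blast
    ultimately show "openin (top_of_set (closed_simplex \<sigma>)) (\<Union>\<K> \<inter> closed_simplex \<sigma>)" by simp
  qed
qed

definition simply_connected_space :: "'a topology \<Rightarrow> bool" where
  "simply_connected_space X \<longleftrightarrow> path_connected_space X \<and>
     (\<forall>p. pathin X p \<and> p 1 = p 0 \<longrightarrow>
        homotopic_with (\<lambda>q. q 1 = q 0) (top_of_set {0..1}) X p (\<lambda>t. p 0))"

end

theory Submission
  imports Defs
begin

text \<open>A loop in the realization is first homotoped, by a Lebesgue number argument, to an
  edge loop through lattice points whose consecutive points span a simplex, i.e. lie at
  \<open>\<ell>\<^sup>1\<close>-distance at most \<open>r\<close>. Each edge is then subdivided into unit steps along a monotone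
  lattice path; all points of such a path lie in the box spanned by the endpoints of the edge and
  hence in one simplex. The resulting closed walk with unit steps is contracted to the origin by
  repeatedly moving all its points one step towards a coordinate hyperplane: two consecutive
  points together with their images span a simplex of diameter at most \<open>2 \<le> r\<close>, so each move is
  a homotopy. Every homotopy used is a straight-line homotopy between loops that lie in a common
  simplex at each time; local finiteness of the complex keeps it inside finitely many simplices,
  which makes it continuous for the weak topology.\<close>

abbreviation freely_homotopic_loops :: "'a topology \<Rightarrow> (real \<Rightarrow> 'a) \<Rightarrow> (real \<Rightarrow> 'a) \<Rightarrow> bool" where
  "freely_homotopic_loops X p q \<equiv> homotopic_with (\<lambda>q. q 1 = q 0) (top_of_set {0..1}) X p q"

section \<open>Geometric realizations\<close>

lemma openin_realization:
  "openin (realization K) U \<longleftrightarrow> U \<subseteq> realization_carrier K \<and>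
      (\<forall>\<sigma>\<in>K. openin (top_of_set (closed_simplex \<sigma>)) (U \<inter> closed_simplex \<sigma>))"
  unfolding realization_def using istopology_realization[of K] by simp

lemma closed_simplex_subset_realization_carrier:
  "\<sigma> \<in> K \<Longrightarrow> closed_simplex \<sigma> \<subseteq> realization_carrier K"
  unfolding realization_carrier_def by blast

lemma topspace_realization: "topspace (realization K) = realization_carrier K"
proof
  show "topspace (realization K) \<subseteq> realization_carrier K"
    by (metis openin_realization openin_topspace)
  have "openin (realization K) (realization_carrier K)"
    unfolding openin_realization
  proof (intro conjI ballI)
    fix \<sigma> assume "\<sigma> \<in> K"
    then have "realization_carrier K \<inter> closed_simplex \<sigma> = closed_simplex \<sigma>"
      using closed_simplex_subset_realization_carrier by blast
    then show "openin (top_of_set (closed_simplex \<sigma>)) (realization_carrier K \<inter> closed_simplex \<sigma>)"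
      by simp
  qed simp
  then show "realization_carrier K \<subseteq> topspace (realization K)"
    by (simp add: openin_subset)
qed

text \<open>Closed simplices on infinite vertex sets are empty, as \<open>sum\<close> is \<open>0\<close> on infinite sets.\<close>

lemma closed_simplex_imp_finite: "\<alpha> \<in> closed_simplex \<sigma> \<Longrightarrow> finite \<sigma>"
  unfolding closed_simplex_def using sum.infinite by fastforce

lemma closed_closed_simplex: "closed (closed_simplex \<sigma>)"
proof -
  have "closed_simplex \<sigma> = (\<Inter>v. {\<alpha>. 0 \<le> \<alpha> v}) \<inter> (\<Inter>v\<in>-\<sigma>. {\<alpha>. \<alpha> v = 0}) \<inter> {\<alpha>. sum \<alpha> \<sigma> = 1}"
    unfolding closed_simplex_def by auto
  also have "closed \<dots>"
    by (intro closed_Int closed_INT ballI closed_Collect_le closed_Collect_eq continuous_intros)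
      simp_all
  finally show ?thesis .
qed

text \<open>The complement of the preimage of an open set \<open>U\<close> is the preimage of the finite union of
  the closed sets \<open>closed_simplex \<sigma> - U\<close>.\<close>

lemma continuous_map_into_realization:
  assumes cont: "continuous_map T euclidean h" and "finite B"
    and in_simplex: "\<And>x. x \<in> topspace T \<Longrightarrow> \<exists>\<sigma>\<in>K. \<sigma> \<subseteq> B \<and> h x \<in> closed_simplex \<sigma>"
  shows "continuous_map T (realization K) h"
  unfolding continuous_map_def
proof (intro conjI allI impI)
  show "h \<in> topspace T \<rightarrow> topspace (realization K)"
    using in_simplex closed_simplex_subset_realization_carrier
    unfolding topspace_realization by blast
next
  fix U assume U: "openin (realization K) U"
  define F where "F = {\<sigma>\<in>K. \<sigma> \<subseteq> B}"
  have "F \<subseteq> Pow B"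
    unfolding F_def by blast
  then have "finite F"
    using \<open>finite B\<close> by (simp add: finite_subset)
  have "closed (closed_simplex \<sigma> - U)" if "\<sigma> \<in> F" for \<sigma>
  proof -
    have "openin (top_of_set (closed_simplex \<sigma>)) (U \<inter> closed_simplex \<sigma>)"
      using U that unfolding F_def openin_realization by blast
    then have "closedin (top_of_set (closed_simplex \<sigma>)) (closed_simplex \<sigma> - U \<inter> closed_simplex \<sigma>)"
      by (simp add: closedin_diff)
    then show ?thesis
      using closed_closed_simplex closedin_closed_trans by (metis Diff_Int2 inf.idem)
  qed
  then have "closed (\<Union>\<sigma>\<in>F. closed_simplex \<sigma> - U)"
    using \<open>finite F\<close> by blast
  then have "closedin T {x \<in> topspace T. h x \<in> (\<Union>\<sigma>\<in>F. closed_simplex \<sigma> - U)}"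
    using closedin_continuous_map_preimage[OF cont] closed_closedin by blast
  moreover have "{x \<in> topspace T. h x \<in> U}
      = topspace T - {x \<in> topspace T. h x \<in> (\<Union>\<sigma>\<in>F. closed_simplex \<sigma> - U)}"
    using in_simplex unfolding F_def by blast
  ultimately show "openin T {x \<in> topspace T. h x \<in> U}"
    by (simp add: openin_diff)
qed

lemma continuous_map_realization_imp_euclidean:
  assumes "continuous_map T (realization (K :: 'a set set)) p"
  shows "continuous_map T euclidean p"
  unfolding continuous_map_def
proof (intro conjI allI impI)
  show "p \<in> topspace T \<rightarrow> topspace euclidean" by simp
next
  fix U :: "('a \<Rightarrow> real) set" assume "openin euclidean U"
  then have "openin (realization K) (U \<inter> realization_carrier K)"
    unfolding openin_realization
  proof (intro conjI ballI)
    fix \<sigma> assume "\<sigma> \<in> K"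
    then have "U \<inter> realization_carrier K \<inter> closed_simplex \<sigma> = closed_simplex \<sigma> \<inter> U"
      using closed_simplex_subset_realization_carrier by blast
    then show "openin (top_of_set (closed_simplex \<sigma>))
        (U \<inter> realization_carrier K \<inter> closed_simplex \<sigma>)"
      using \<open>openin euclidean U\<close> by (simp add: openin_open_Int)
  qed simp
  then have "openin T {x \<in> topspace T. p x \<in> U \<inter> realization_carrier K}"
    by (rule openin_continuous_map_preimage[OF assms])
  moreover have "{x \<in> topspace T. p x \<in> U \<inter> realization_carrier K} = {x \<in> topspace T. p x \<in> U}"
    using continuous_map_image_subset_topspace[OF assms] unfolding topspace_realization by blast
  ultimately show "openin T {x \<in> topspace T. p x \<in> U}" by simp
qed

lemma pathin_realizationD:
  assumes "pathin (realization K) p"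
  shows "continuous_on {0..1} p" and "t \<in> {0..1} \<Longrightarrow> p t \<in> realization_carrier K"
  using continuous_map_realization_imp_euclidean[of "top_of_set {0..1}" K p] assms
  unfolding pathin_def by (simp, auto simp: continuous_map_def topspace_realization)

section \<open>Straight-line homotopies and edge paths\<close>

definition convex_comb :: "real \<Rightarrow> ('a \<Rightarrow> real) \<Rightarrow> ('a \<Rightarrow> real) \<Rightarrow> 'a \<Rightarrow> real" where
  "convex_comb s \<alpha> \<beta> = (\<lambda>x. (1 - s) * \<alpha> x + s * \<beta> x)"

definition vertex :: "'a \<Rightarrow> 'a \<Rightarrow> real" where
  "vertex v = (\<lambda>x. if x = v then 1 else 0)"

lemma convex_comb_0 [simp]: "convex_comb 0 \<alpha> \<beta> = \<alpha>"
  and convex_comb_1 [simp]: "convex_comb 1 \<alpha> \<beta> = \<beta>"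
  by (auto simp: convex_comb_def)

lemma convex_comb_in_closed_simplex:
  assumes "\<alpha> \<in> closed_simplex \<sigma>" "\<beta> \<in> closed_simplex \<sigma>" "0 \<le> s" "s \<le> 1"
  shows "convex_comb s \<alpha> \<beta> \<in> closed_simplex \<sigma>"
proof -
  have "sum (convex_comb s \<alpha> \<beta>) \<sigma> = (1 - s) * sum \<alpha> \<sigma> + s * sum \<beta> \<sigma>"
    unfolding convex_comb_def by (simp add: sum.distrib sum_distrib_left)
  then show ?thesis
    using assms unfolding closed_simplex_def convex_comb_def by auto
qed

lemma vertex_in_closed_simplex: "finite \<sigma> \<Longrightarrow> v \<in> \<sigma> \<Longrightarrow> vertex v \<in> closed_simplex \<sigma>"
  unfolding closed_simplex_def vertex_def by auto

lemma closed_simplex_positive_imp_mem: "\<alpha> \<in> closed_simplex \<sigma> \<Longrightarrow> 0 < \<alpha> v \<Longrightarrow> v \<in> \<sigma>"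
  unfolding closed_simplex_def by force

lemma closed_simplex_obtains_positive:
  assumes "\<alpha> \<in> closed_simplex \<sigma>"
  obtains v where "v \<in> \<sigma>" "0 < \<alpha> v"
proof -
  have nonneg: "\<And>v. 0 \<le> \<alpha> v" and "sum \<alpha> \<sigma> = 1"
    using assms unfolding closed_simplex_def by auto
  then obtain v where v: "v \<in> \<sigma>" "\<alpha> v \<noteq> 0"
    using sum.neutral by (metis zero_neq_one)
  have "0 < \<alpha> v"
    using nonneg[of v] v(2) by linarith
  with v(1) show thesis
    by (rule that)
qed

lemma realization_carrier_positive_imp_simplex:
  assumes "\<alpha> \<in> realization_carrier K" "0 < \<alpha> v"
  obtains \<sigma> where "\<sigma> \<in> K" "\<alpha> \<in> closed_simplex \<sigma>" "v \<in> \<sigma>"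
proof -
  obtain \<sigma> where \<sigma>: "\<sigma> \<in> K" "\<alpha> \<in> closed_simplex \<sigma>"
    using assms(1) unfolding realization_carrier_def by blast
  moreover have "v \<in> \<sigma>"
    using closed_simplex_positive_imp_mem[OF \<sigma>(2) assms(2)] .
  ultimately show thesis
    by (rule that)
qed

lemma realization_carrier_obtains_vertex:
  assumes "\<alpha> \<in> realization_carrier K"
  obtains \<sigma> v where "\<sigma> \<in> K" "\<alpha> \<in> closed_simplex \<sigma>" "v \<in> \<sigma>" "0 < \<alpha> v"
proof -
  obtain \<sigma> where \<sigma>: "\<sigma> \<in> K" "\<alpha> \<in> closed_simplex \<sigma>"
    using assms unfolding realization_carrier_def by blast
  obtain v where "v \<in> \<sigma>" "0 < \<alpha> v"
    using closed_simplex_obtains_positive[OF \<sigma>(2)] .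
  with \<sigma> show thesis
    by (rule that)
qed

lemma continuous_on_convex_comb:
  assumes "continuous_on S f" "continuous_on S g" "continuous_on S s"
  shows "continuous_on S (\<lambda>z. convex_comb (s z) (f z) (g z))"
  unfolding convex_comb_def
proof (rule continuous_on_coordinatewise_then_product)
  fix x
  have "continuous_on S (\<lambda>z. f z x)" "continuous_on S (\<lambda>z. g z x)"
    using assms(1,2) by (auto intro: continuous_on_product_then_coordinatewise)
  then show "continuous_on S (\<lambda>z. (1 - s z) * f z x + s z * g z x)"
    by (intro continuous_intros assms(3))
qed

lemma pathin_realization_segment:
  assumes "\<sigma> \<in> K" "\<alpha> \<in> closed_simplex \<sigma>" "\<beta> \<in> closed_simplex \<sigma>"
  shows "pathin (realization K) (\<lambda>t. convex_comb t \<alpha> \<beta>)"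
  unfolding pathin_def
proof (rule continuous_map_into_realization)
  show "continuous_map (top_of_set {0..1}) euclidean (\<lambda>t. convex_comb t \<alpha> \<beta>)"
    by (simp add: continuous_on_convex_comb)
  show "finite \<sigma>"
    using assms(2) by (rule closed_simplex_imp_finite)
  show "\<exists>\<sigma>'\<in>K. \<sigma>' \<subseteq> \<sigma> \<and> convex_comb t \<alpha> \<beta> \<in> closed_simplex \<sigma>'"
    if "t \<in> topspace (top_of_set {0..1})" for t
    using that assms(1) convex_comb_in_closed_simplex[OF assms(2,3)] by auto
qed

lemma freely_homotopic_loops_straight_line:
  assumes cp: "continuous_on {0..1} p" and cq: "continuous_on {0..1} q"
    and "p 1 = p 0" "q 1 = q 0" "finite B"
    and common: "\<And>t. t \<in> {0..1} \<Longrightarrow>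
      \<exists>\<sigma>\<in>K. \<sigma> \<subseteq> B \<and> p t \<in> closed_simplex \<sigma> \<and> q t \<in> closed_simplex \<sigma>"
  shows "freely_homotopic_loops (realization K) p q"
  unfolding homotopic_with_def
proof (intro exI conjI allI ballI)
  let ?h = "\<lambda>z :: real \<times> real. convex_comb (fst z) (p (snd z)) (q (snd z))"
  have "continuous_on ({0..1} \<times> {0..1}) (\<lambda>z :: real \<times> real. p (snd z))"
    "continuous_on ({0..1} \<times> {0..1}) (\<lambda>z :: real \<times> real. q (snd z))"
    by (rule continuous_on_compose2[OF cp continuous_on_snd[OF continuous_on_id]]
        continuous_on_compose2[OF cq continuous_on_snd[OF continuous_on_id]]; force)+
  then have "continuous_on ({0..1} \<times> {0..1}) ?h"
    by (intro continuous_on_convex_comb continuous_on_fst continuous_on_id)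
  then show "continuous_map (prod_topology (top_of_set {0..1}) (top_of_set {0..1}))
      (realization K) ?h"
  proof (intro continuous_map_into_realization[OF _ \<open>finite B\<close>])
    fix z assume "z \<in> topspace (prod_topology (top_of_set {0..1::real}) (top_of_set {0..1::real}))"
    then have z: "fst z \<in> {0..1}" "snd z \<in> {0..1}"
      by auto
    then obtain \<sigma> where \<sigma>: "\<sigma> \<in> K" "\<sigma> \<subseteq> B"
        "p (snd z) \<in> closed_simplex \<sigma>" "q (snd z) \<in> closed_simplex \<sigma>"
      using common by blast
    moreover have "?h z \<in> closed_simplex \<sigma>"
      using convex_comb_in_closed_simplex[OF \<sigma>(3,4)] z by simp
    ultimately show "\<exists>\<sigma>\<in>K. \<sigma> \<subseteq> B \<and> ?h z \<in> closed_simplex \<sigma>"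
      by blast
  qed (simp add: prod_topology_subtopology_eu continuous_map_iff_continuous)
qed (use \<open>p 1 = p 0\<close> \<open>q 1 = q 0\<close> in auto)

definition tent :: "nat \<Rightarrow> nat \<Rightarrow> real \<Rightarrow> real" where
  "tent M j t = max 0 (1 - \<bar>real M * t - real j\<bar>)"

text \<open>The loop running through the vertices \<open>c 0, \<dots>, c M\<close>, reaching \<open>c j\<close> at time \<open>j / M\<close>.\<close>

definition edge_path :: "nat \<Rightarrow> (nat \<Rightarrow> 'a) \<Rightarrow> real \<Rightarrow> 'a \<Rightarrow> real" where
  "edge_path M c t = (\<lambda>x. \<Sum>j\<le>M. tent M j t * vertex (c j) x)"

definition slot :: "nat \<Rightarrow> nat \<Rightarrow> real set" where
  "slot M m = {t. real m \<le> real M * t \<and> real M * t \<le> real m + 1}"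

lemma continuous_on_edge_path: "continuous_on S (edge_path M c)"
  unfolding edge_path_def
proof (rule continuous_on_coordinatewise_then_product)
  show "continuous_on S (\<lambda>t. \<Sum>j\<le>M. tent M j t * vertex (c j) x)" for x
    unfolding tent_def by (intro continuous_intros)
qed

lemma tent_on_slot:
  assumes "real M * t = real m + u" "0 \<le> u" "u \<le> 1"
  shows "tent M j t = (if j = m then 1 - u else 0) + (if j = Suc m then u else 0)"
proof -
  consider "real j + 1 \<le> real m" | "j = m" | "j = Suc m" | "real m + 2 \<le> real j"
    by linarith
  then show ?thesis
    by cases (use assms in \<open>auto simp: tent_def\<close>)
qed

lemma edge_path_on_slot:
  assumes "m < M" "t \<in> slot M m"
  shows "edge_path M c t = convex_comb (real M * t - real m) (vertex (c m)) (vertex (c (Suc m)))"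
proof
  fix x
  define u where "u = real M * t - real m"
  have "0 \<le> u" "u \<le> 1"
    using assms(2) unfolding u_def slot_def by auto
  then have "tent M j t = (if j = m then 1 - u else 0) + (if j = Suc m then u else 0)" for j
    by (intro tent_on_slot) (simp add: u_def)
  then have "tent M j t * vertex (c j) x = (if j = m then (1 - u) * vertex (c j) x else 0)
      + (if j = Suc m then u * vertex (c j) x else 0)" for j
    by simp
  then have "edge_path M c t x = (\<Sum>j\<le>M. (if j = m then (1 - u) * vertex (c j) x else 0)
      + (if j = Suc m then u * vertex (c j) x else 0))"
    unfolding edge_path_def by (simp only:)
  also have "\<dots> = (1 - u) * vertex (c m) x + u * vertex (c (Suc m)) x"
    using assms(1) by (simp add: sum.distrib)
  finally show "edge_path M c t x = convex_comb u (vertex (c m)) (vertex (c (Suc m))) x"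
    unfolding convex_comb_def .
qed

lemma edge_path_0: "0 < M \<Longrightarrow> edge_path M c 0 = vertex (c 0)"
  using edge_path_on_slot[of 0 M 0 c] by (simp add: slot_def)

lemma edge_path_1: "0 < M \<Longrightarrow> edge_path M c 1 = vertex (c M)"
  using edge_path_on_slot[of "M - 1" M 1 c] by (simp add: slot_def of_nat_diff)

lemma edge_path_closed: "0 < M \<Longrightarrow> c M = c 0 \<Longrightarrow> edge_path M c 1 = edge_path M c 0"
  by (simp add: edge_path_0 edge_path_1)

lemma edge_path_in_closed_simplex:
  assumes "m < M" "t \<in> slot M m" "finite \<sigma>" "c m \<in> \<sigma>" "c (Suc m) \<in> \<sigma>"
  shows "edge_path M c t \<in> closed_simplex \<sigma>"
  unfolding edge_path_on_slot[OF assms(1,2)]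
  using assms
  by (intro convex_comb_in_closed_simplex vertex_in_closed_simplex) (auto simp: slot_def)

lemma slot_subset_unit_interval:
  assumes "m < M"
  shows "slot M m \<subseteq> {0..1}"
proof
  fix t assume "t \<in> slot M m"
  then have "real m \<le> real M * t" "real M * t \<le> real m + 1"
    unfolding slot_def by auto
  moreover have "real m + 1 \<le> real M"
    using assms by linarith
  ultimately have "0 \<le> real M * t" "real M * t \<le> real M"
    by linarith+
  then show "t \<in> {0..1}"
    using assms by (simp add: zero_le_mult_iff mult_le_cancel_left1)
qed

lemma slot_cover:
  assumes "0 < M" "t \<in> {0..1}"
  obtains m where "m < M" "t \<in> slot M m"
proof -
  define m where "m = min (M - 1) (nat \<lfloor>real M * t\<rfloor>)"
  have Mt: "0 \<le> real M * t" "real M * t \<le> real M"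
    using assms by (auto simp: mult_le_cancel_left1)
  have "real m \<le> real M * t"
    unfolding m_def using Mt by linarith
  moreover have "real M * t \<le> real m + 1"
  proof (cases "m = M - 1")
    case True
    then show ?thesis
      using Mt assms(1) by (simp add: of_nat_diff)
  next
    case False
    then have "m = nat \<lfloor>real M * t\<rfloor>"
      unfolding m_def by (simp add: min_def split: if_splits)
    then show ?thesis
      using Mt by linarith
  qed
  moreover have "m < M"
    unfolding m_def using assms(1) by simp
  ultimately show thesis
    using that unfolding slot_def by blast
qed

lemma freely_homotopic_edge_paths:
  assumes "0 < M" "a M = a 0" "b M = b 0"
    and square: "\<And>m. m < M \<Longrightarrow> {a m, a (Suc m), b m, b (Suc m)} \<in> K"
  shows "freely_homotopic_loops (realization K) (edge_path M a) (edge_path M b)"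
proof (rule freely_homotopic_loops_straight_line)
  show "edge_path M a 1 = edge_path M a 0" "edge_path M b 1 = edge_path M b 0"
    using assms(1-3) by (simp_all add: edge_path_closed)
  show "finite (a ` {..M} \<union> b ` {..M})"
    by simp
  fix t :: real assume "t \<in> {0..1}"
  then obtain m where m: "m < M" "t \<in> slot M m"
    using slot_cover[OF \<open>0 < M\<close>] by blast
  let ?\<sigma> = "{a m, a (Suc m), b m, b (Suc m)}"
  have "?\<sigma> \<subseteq> a ` {..M} \<union> b ` {..M}"
    using m(1) by auto
  moreover have "edge_path M a t \<in> closed_simplex ?\<sigma>" "edge_path M b t \<in> closed_simplex ?\<sigma>"
    by (auto intro: edge_path_in_closed_simplex[OF m])
  ultimately show "\<exists>\<sigma>\<in>K. \<sigma> \<subseteq> a ` {..M} \<union> b ` {..M} \<and>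
      edge_path M a t \<in> closed_simplex \<sigma> \<and> edge_path M b t \<in> closed_simplex \<sigma>"
    using square[OF m(1)] by blast
qed (rule continuous_on_edge_path)+

section \<open>Approximating loops by edge paths\<close>

lemma slot_eq_interval: "0 < M \<Longrightarrow> slot M m = {real m / real M .. (real m + 1) / real M}"
  unfolding slot_def by (auto simp: field_simps)

lemma unit_interval_windows:
  fixes V :: "'v \<Rightarrow> real set"
  assumes V_open: "\<And>v. open (V v)" and cover: "{0..1} \<subseteq> (\<Union>v. V v)"
    and ends: "0 \<in> V v0" "1 \<in> V v0"
  obtains M where "0 < M"
    "\<And>m. \<exists>v. {0..1} \<inter> cball (real m / real M) (1 / real M) \<subseteq> V v \<and> (m = 0 \<or> m = M \<longrightarrow> v = v0)"
proof -
  obtain \<delta> where "0 < \<delta>" and \<delta>: "\<And>T. T \<subseteq> {0..1} \<Longrightarrow> diameter T < \<delta> \<Longrightarrow> \<exists>B\<in>range V. T \<subseteq> B"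
    by (rule Lebesgue_number_lemma[OF compact_Icc _ cover]) (use V_open in auto)
  obtain e0 where "0 < e0" "ball 0 e0 \<subseteq> V v0"
    using V_open ends(1) openE by metis
  obtain e1 where "0 < e1" "ball 1 e1 \<subseteq> V v0"
    using V_open ends(2) openE by metis
  define d where "d = min \<delta> (min e0 e1)"
  have "0 < d / 2"
    unfolding d_def using \<open>0 < \<delta>\<close> \<open>0 < e0\<close> \<open>0 < e1\<close> by simp
  then obtain M :: nat where "M \<noteq> 0" "inverse (real M) < d / 2"
    using real_arch_inverse by blast
  then have "0 < M" "2 / real M < d" "1 / real M < d"
    by (simp_all add: field_simps)
  have "\<exists>v. {0..1} \<inter> cball (real m / real M) (1 / real M) \<subseteq> V v \<and> (m = 0 \<or> m = M \<longrightarrow> v = v0)" for m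
  proof (cases "m = 0 \<or> m = M")
    case True
    then have "cball (real m / real M) (1 / real M) \<subseteq> ball 0 e0
        \<or> cball (real m / real M) (1 / real M) \<subseteq> ball 1 e1"
      using \<open>1 / real M < d\<close> \<open>0 < M\<close> unfolding d_def by (auto simp: cball_subset_ball_iff)
    then show ?thesis
      using \<open>ball 0 e0 \<subseteq> V v0\<close> \<open>ball 1 e1 \<subseteq> V v0\<close> by blast
  next
    case False
    have "diameter ({0..1} \<inter> cball (real m / real M) (1 / real M))
        \<le> diameter (cball (real m / real M) (1 / real M))"
      by (rule diameter_subset) auto
    also have "\<dots> = 2 / real M"
      by simp
    finally have "\<exists>B\<in>range V. {0..1} \<inter> cball (real m / real M) (1 / real M) \<subseteq> B"
      using \<delta> \<open>2 / real M < d\<close> unfolding d_def by auto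
    with False show ?thesis
      by blast
  qed
  with \<open>0 < M\<close> show thesis
    by (rule that)
qed

lemma slot_subset_windows:
  assumes "m < M"
  shows "slot M m \<subseteq> cball (real m / real M) (1 / real M) \<inter>
    cball (real (Suc m) / real M) (1 / real M)"
proof
  fix t assume "t \<in> slot M m"
  then have "real m / real M \<le> t" "t \<le> real m / real M + 1 / real M"
    using slot_eq_interval[of M m] assms by (auto simp: add_divide_distrib)
  then show "t \<in> cball (real m / real M) (1 / real M) \<inter> cball (real (Suc m) / real M) (1 / real M)"
    by (auto simp: add_divide_distrib dist_real_def)
qed

lemma unit_interval_chain_cover:
  fixes V :: "'v \<Rightarrow> real set"
  assumes "\<And>v. open (V v)" "{0..1} \<subseteq> (\<Union>v. V v)" "0 \<in> V v0" "1 \<in> V v0"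
  obtains M c where "0 < M" "c 0 = v0" "c M = v0"
    "\<And>m. m < M \<Longrightarrow> slot M m \<subseteq> V (c m) \<inter> V (c (Suc m))"
proof -
  obtain M where "0 < M" and
    "\<And>m. \<exists>v. {0..1} \<inter> cball (real m / real M) (1 / real M) \<subseteq> V v \<and> (m = 0 \<or> m = M \<longrightarrow> v = v0)"
    using unit_interval_windows[OF assms] by blast
  then obtain c where c: "\<And>m. {0..1} \<inter> cball (real m / real M) (1 / real M) \<subseteq> V (c m)"
    "\<And>m. m = 0 \<or> m = M \<Longrightarrow> c m = v0"
    by metis
  show thesis
  proof (rule that[of M c])
    show "slot M m \<subseteq> V (c m) \<inter> V (c (Suc m))" if "m < M" for m
      using slot_subset_unit_interval[OF that] slot_subset_windows[OF that]
        c(1)[of m] c(1)[of "Suc m"] by blast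
  qed (use \<open>0 < M\<close> c(2) in simp_all)
qed

text \<open>In barycentric coordinates the open star of a vertex \<open>v\<close> is \<open>{\<alpha>. 0 < \<alpha> v}\<close>.\<close>

definition star_approx :: "(real \<Rightarrow> 'a \<Rightarrow> real) \<Rightarrow> nat \<Rightarrow> (nat \<Rightarrow> 'a) \<Rightarrow> bool" where
  "star_approx p M c \<longleftrightarrow> 0 < M \<and> c M = c 0 \<and>
     (\<forall>m<M. \<forall>t\<in>slot M m. 0 < p t (c m) \<and> 0 < p t (c (Suc m)))"

lemma star_approx_exists:
  assumes p: "pathin (realization K) p" and "p 1 = p 0"
  obtains M c where "star_approx p M c"
proof -
  have "continuous_on {0..1} (\<lambda>t. p t v)" for v
    using pathin_realizationD(1)[OF p] by (rule continuous_on_product_then_coordinatewise)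
  then have "\<exists>V. open V \<and> V \<inter> {0..1} = (\<lambda>t. p t v) -` {0<..} \<inter> {0..1}" for v
    unfolding continuous_on_open_invariant using open_greaterThan by blast
  then obtain V where V_open: "\<And>v. open (V v)"
    and V: "\<And>v. V v \<inter> {0..1} = (\<lambda>t. p t v) -` {0<..} \<inter> {0..1}"
    by metis
  have cover: "{0..1} \<subseteq> (\<Union>v. V v)"
  proof
    fix t :: real assume "t \<in> {0..1}"
    moreover obtain v where "0 < p t v"
      using realization_carrier_obtains_vertex[OF pathin_realizationD(2)[OF p \<open>t \<in> {0..1}\<close>]]
      by metis
    ultimately show "t \<in> (\<Union>v. V v)"
      using V[of v] by blast
  qed
  have "p 0 \<in> realization_carrier K"
    using pathin_realizationD(2)[OF p, of 0] by simp
  then obtain v0 where "0 < p 0 v0"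
    using realization_carrier_obtains_vertex by metis
  then have "0 \<in> V v0 \<inter> {0..1}" "1 \<in> V v0 \<inter> {0..1}"
    unfolding V using \<open>p 1 = p 0\<close> by simp_all
  then have "0 \<in> V v0" "1 \<in> V v0"
    by simp_all
  then obtain M c where "0 < M" "c 0 = v0" "c M = v0"
    and slots: "\<And>m. m < M \<Longrightarrow> slot M m \<subseteq> V (c m) \<inter> V (c (Suc m))"
    using unit_interval_chain_cover[OF V_open cover] by blast
  have "0 < p t (c m) \<and> 0 < p t (c (Suc m))" if "m < M" "t \<in> slot M m" for m t
    using slots[OF that(1)] that slot_subset_unit_interval[OF that(1)] V[of "c m"] V[of "c (Suc m)"]
    by blast
  with \<open>0 < M\<close> \<open>c 0 = v0\<close> \<open>c M = v0\<close> have "star_approx p M c"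
    unfolding star_approx_def by simp
  then show thesis
    by (rule that)
qed

lemma slot_stretch:
  assumes "0 < L" "t \<in> slot (N * L) m"
  shows "t \<in> slot N (m div L)"
proof -
  define j where "j = m div L"
  have "j * L + m mod L = m" "m mod L < L"
    unfolding j_def using assms(1) by simp_all
  then have "j * L \<le> m" "m + 1 \<le> (j + 1) * L"
    by simp_all
  then have "real (j * L) \<le> real m" "real (m + 1) \<le> real ((j + 1) * L)"
    by (simp_all only: of_nat_le_iff)
  then have "real L * real j \<le> real m" "real m + 1 \<le> real L * (real j + 1)"
    by (simp_all add: ac_simps distrib_left)
  moreover have "real m \<le> real L * (real N * t)" "real L * (real N * t) \<le> real m + 1"
    using assms(2) unfolding slot_def by (simp_all add: ac_simps)
  ultimately have "real L * real j \<le> real L * (real N * t)"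
    "real L * (real N * t) \<le> real L * (real j + 1)"
    by linarith+
  then show ?thesis
    unfolding slot_def j_def[symmetric] using assms(1) by (simp add: mult_le_cancel_left_pos)
qed

lemma star_approx_stretch:
  assumes "star_approx p N c" "0 < L"
  shows "star_approx p (N * L) (\<lambda>m. c (m div L))"
  unfolding star_approx_def
proof (intro conjI allI impI ballI)
  have "0 < N" "c N = c 0"
    and pos: "\<And>j t. j < N \<Longrightarrow> t \<in> slot N j \<Longrightarrow> 0 < p t (c j) \<and> 0 < p t (c (Suc j))"
    using assms(1) unfolding star_approx_def by auto
  then show "0 < N * L" "c (N * L div L) = c (0 div L)"
    using assms(2) by simp_all
  fix m t assume "m < N * L" "t \<in> slot (N * L) m"
  then have "0 < p t (c (m div L))" "0 < p t (c (Suc (m div L)))"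
    using pos[OF _ slot_stretch[OF assms(2)]] by (simp_all add: less_mult_imp_div_less)
  moreover have "Suc m div L = m div L \<or> Suc m div L = Suc (m div L)"
    by (simp add: div_Suc)
  ultimately show "0 < p t (c (m div L))" "0 < p t (c (Suc m div L))"
    by auto
qed

lemma star_approx_edge_simplex:
  assumes p: "pathin (realization K) p" and "star_approx p M c" "m < M"
  obtains \<sigma> where "\<sigma> \<in> K" "c m \<in> \<sigma>" "c (Suc m) \<in> \<sigma>"
proof -
  define t where "t = real m / real M"
  have "t \<in> slot M m"
    using assms(2,3) unfolding t_def slot_def star_approx_def by auto
  then have "0 < p t (c m)" "0 < p t (c (Suc m))" and "t \<in> {0..1}"
    using assms(2,3) slot_subset_unit_interval[OF assms(3)] unfolding star_approx_def by auto
  then obtain \<sigma> where \<sigma>: "\<sigma> \<in> K" "p t \<in> closed_simplex \<sigma>" "c m \<in> \<sigma>"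
    using realization_carrier_positive_imp_simplex[OF pathin_realizationD(2)[OF p]] by metis
  moreover have "c (Suc m) \<in> \<sigma>"
    using closed_simplex_positive_imp_mem[OF \<sigma>(2) \<open>0 < p t (c (Suc m))\<close>] .
  ultimately show thesis
    using that by blast
qed

lemma freely_homotopic_star_approx_edge_path:
  assumes locally_finite: "\<And>v. finite (\<Union>{\<sigma>\<in>K. v \<in> \<sigma>})"
    and p: "pathin (realization K) p" and "p 1 = p 0" and approx: "star_approx p M c"
  shows "freely_homotopic_loops (realization K) p (edge_path M c)"
proof (rule freely_homotopic_loops_straight_line)
  have "0 < M" "c M = c 0"
    and pos: "\<And>m t. m < M \<Longrightarrow> t \<in> slot M m \<Longrightarrow> 0 < p t (c m) \<and> 0 < p t (c (Suc m))"
    using approx unfolding star_approx_def by auto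
  show "continuous_on {0..1} p"
    using pathin_realizationD(1)[OF p] .
  show "edge_path M c 1 = edge_path M c 0"
    using \<open>0 < M\<close> \<open>c M = c 0\<close> by (rule edge_path_closed)
  show "finite (\<Union>m\<le>M. \<Union>{\<sigma>\<in>K. c m \<in> \<sigma>})"
    using locally_finite by blast
  fix t :: real assume "t \<in> {0..1}"
  then obtain m where m: "m < M" "t \<in> slot M m"
    using slot_cover[OF \<open>0 < M\<close>] by blast
  obtain \<sigma> where \<sigma>: "\<sigma> \<in> K" "p t \<in> closed_simplex \<sigma>" "c m \<in> \<sigma>"
    using realization_carrier_positive_imp_simplex[OF pathin_realizationD(2)[OF p \<open>t \<in> {0..1}\<close>]]
      pos[OF m] by metis
  have "c (Suc m) \<in> \<sigma>"
    using closed_simplex_positive_imp_mem[OF \<sigma>(2)] pos[OF m] by blast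
  then have "edge_path M c t \<in> closed_simplex \<sigma>"
    using edge_path_in_closed_simplex[of m M t \<sigma> c] m closed_simplex_imp_finite[OF \<sigma>(2)] \<sigma>(3)
    by blast
  moreover have "\<sigma> \<subseteq> \<Union>{\<sigma>\<in>K. c m \<in> \<sigma>}"
    using \<sigma>(1,3) by blast
  then have "\<sigma> \<subseteq> (\<Union>m\<le>M. \<Union>{\<sigma>\<in>K. c m \<in> \<sigma>})"
    using m(1) by (meson UN_upper atMost_iff less_imp_le subset_trans)
  ultimately show "\<exists>\<sigma>\<in>K. \<sigma> \<subseteq> (\<Union>m\<le>M. \<Union>{\<sigma>\<in>K. c m \<in> \<sigma>}) \<and>
      p t \<in> closed_simplex \<sigma> \<and> edge_path M c t \<in> closed_simplex \<sigma>"
    using \<sigma> by blast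
qed (fact continuous_on_edge_path \<open>p 1 = p 0\<close>)+

section \<open>The lattice \<open>\<int>\<^sup>n\<close> with the \<open>\<ell>\<^sup>1\<close> metric\<close>

definition l1_dist :: "int ^ 'n \<Rightarrow> int ^ 'n \<Rightarrow> int" where
  "l1_dist x y = (\<Sum>i\<in>UNIV. \<bar>x $ i - y $ i\<bar>)"

lemma manhattan_eq_l1_dist: "manhattan x y = real_of_int (l1_dist x y)"
  unfolding manhattan_def l1_dist_def by simp

lemma l1_dist_commute: "l1_dist x y = l1_dist y x"
  unfolding l1_dist_def by (simp add: abs_minus_commute)

lemma l1_dist_self [simp]: "l1_dist x x = 0"
  unfolding l1_dist_def by simp

lemma l1_dist_nonneg: "0 \<le> l1_dist x y"
  unfolding l1_dist_def by (simp add: sum_nonneg)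

lemma l1_dist_triangle: "l1_dist x z \<le> l1_dist x y + l1_dist y z"
  unfolding l1_dist_def sum.distrib[symmetric] by (intro sum_mono) linarith

lemma abs_component_le_l1_dist: "\<bar>x $ i - y $ i\<bar> \<le> l1_dist x y"
  unfolding l1_dist_def by (rule member_le_sum) auto

lemma l1_dist_eq_0_iff: "l1_dist x y = 0 \<longleftrightarrow> x = y"
proof
  assume "l1_dist x y = 0"
  then have "\<bar>x $ i - y $ i\<bar> \<le> 0" for i
    using abs_component_le_l1_dist[of x i y] by simp
  then show "x = y"
    by (simp add: vec_eq_iff)
qed simp

lemma finite_l1_ball: "finite {y. l1_dist x y \<le> R}"
proof -
  have "{y. l1_dist x y \<le> R} \<subseteq> vec_lambda ` (\<Pi> i\<in>UNIV. {x $ i - R .. x $ i + R})"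
  proof
    fix y assume "y \<in> {y. l1_dist x y \<le> R}"
    then have bound: "\<bar>x $ i - y $ i\<bar> \<le> R" for i
      using abs_component_le_l1_dist[of x i y] by simp
    have "y $ i \<in> {x $ i - R .. x $ i + R}" for i
      using bound[of i] by (auto simp: abs_le_iff)
    then have "vec_nth y \<in> (\<Pi> i\<in>UNIV. {x $ i - R .. x $ i + R})"
      by blast
    with vec_nth_inverse[of y, symmetric]
    show "y \<in> vec_lambda ` (\<Pi> i\<in>UNIV. {x $ i - R .. x $ i + R})"
      by (rule image_eqI)
  qed
  moreover have "finite (\<Pi> i\<in>UNIV. {x $ i - R .. x $ i + R})"
    using finite_PiE[of UNIV "\<lambda>i. {x $ i - R .. x $ i + R}"] by (simp add: PiE_UNIV_domain)
  ultimately show ?thesis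
    using finite_subset by blast
qed

abbreviation VR_lattice :: "real \<Rightarrow> (int ^ 'n) set set" where
  "VR_lattice r \<equiv> VR_complex manhattan UNIV r"

lemma mem_VR_lattice:
  "\<sigma> \<in> VR_lattice r \<longleftrightarrow> finite \<sigma> \<and> \<sigma> \<noteq> {} \<and> (\<forall>x\<in>\<sigma>. \<forall>y\<in>\<sigma>. real_of_int (l1_dist x y) \<le> r)"
  unfolding VR_complex_def manhattan_eq_l1_dist by auto

lemma VR_lattice_memI:
  assumes "finite \<sigma>" "\<sigma> \<noteq> {}" "\<And>u v. u \<in> \<sigma> \<Longrightarrow> v \<in> \<sigma> \<Longrightarrow> l1_dist u v \<le> k" "real_of_int k \<le> r"
  shows "\<sigma> \<in> VR_lattice r"
  unfolding mem_VR_lattice using assms by (meson of_int_le_iff order_trans)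

lemma VR_lattice_locally_finite: "finite (\<Union>{\<sigma> \<in> VR_lattice r. v \<in> \<sigma>})"
proof (rule finite_subset)
  show "\<Union>{\<sigma> \<in> VR_lattice r. v \<in> \<sigma>} \<subseteq> {y. l1_dist v y \<le> \<lfloor>r\<rfloor>}"
    unfolding mem_VR_lattice by (auto simp: le_floor_iff)
qed (rule finite_l1_ball)

lemma star_approx_VR_lattice_step:
  assumes "pathin (realization (VR_lattice r)) p" "star_approx p M c" "m < M"
  shows "real_of_int (l1_dist (c m) (c (Suc m))) \<le> r"
proof -
  obtain \<sigma> where "\<sigma> \<in> VR_lattice r" "c m \<in> \<sigma>" "c (Suc m) \<in> \<sigma>"
    using star_approx_edge_simplex[OF assms] by metis
  then show ?thesis
    unfolding mem_VR_lattice by blast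
qed

section \<open>Lattice walks\<close>

definition step_towards :: "int ^ 'n \<Rightarrow> int ^ 'n \<Rightarrow> int ^ 'n" where
  "step_towards b u = (if u = b then u else
     (\<chi> i. if i = (SOME k. u $ k \<noteq> b $ k) then u $ i + sgn (b $ i - u $ i) else u $ i))"

definition lattice_walk :: "int ^ 'n \<Rightarrow> int ^ 'n \<Rightarrow> nat \<Rightarrow> int ^ 'n" where
  "lattice_walk a b i = (step_towards b ^^ i) a"

definition l1_between :: "int ^ 'n \<Rightarrow> int ^ 'n \<Rightarrow> int ^ 'n \<Rightarrow> bool" where
  "l1_between a b u \<longleftrightarrow> (\<forall>i. \<bar>a $ i - u $ i\<bar> + \<bar>u $ i - b $ i\<bar> = \<bar>a $ i - b $ i\<bar>)"

lemma step_towards_eq: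
  assumes "u \<noteq> b"
  obtains k where "u $ k \<noteq> b $ k"
    "step_towards b u = (\<chi> i. if i = k then u $ i + sgn (b $ i - u $ i) else u $ i)"
proof -
  define k where "k = (SOME k. u $ k \<noteq> b $ k)"
  have "u $ k \<noteq> b $ k"
    unfolding k_def using assms by (metis (mono_tags) someI_ex vec_eq_iff)
  moreover have "step_towards b u = (\<chi> i. if i = k then u $ i + sgn (b $ i - u $ i) else u $ i)"
    unfolding step_towards_def k_def using assms by simp
  ultimately show thesis
    by (rule that)
qed

lemma step_towards_self [simp]: "step_towards b b = b"
  unfolding step_towards_def by simp

lemma l1_dist_step_towards:
  fixes u b :: "int ^ 'n"
  assumes "u \<noteq> b"
  shows "l1_dist (step_towards b u) b = l1_dist u b - 1" and "l1_dist u (step_towards b u) = 1"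
proof -
  obtain k where k: "u $ k \<noteq> b $ k"
    and w: "step_towards b u = (\<chi> i. if i = k then u $ i + sgn (b $ i - u $ i) else u $ i)"
    using step_towards_eq[OF assms] by metis
  have split: "(\<Sum>i\<in>UNIV. f i) = f k + (\<Sum>i\<in>UNIV - {k}. f i)" for f :: "'n \<Rightarrow> int"
    by (simp add: sum.remove)
  have "\<bar>u $ k + sgn (b $ k - u $ k) - b $ k\<bar> = \<bar>u $ k - b $ k\<bar> - 1"
    "\<bar>u $ k - (u $ k + sgn (b $ k - u $ k))\<bar> = 1"
    using k by (cases "u $ k < b $ k"; simp)+
  then show "l1_dist (step_towards b u) b = l1_dist u b - 1" "l1_dist u (step_towards b u) = 1"
    unfolding l1_dist_def w split[of "\<lambda>i. \<bar>_ $ i - _ $ i\<bar>"] by simp_all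
qed

lemma int_step_towards_between:
  fixes a u b :: int
  assumes "\<bar>a - u\<bar> + \<bar>u - b\<bar> = \<bar>a - b\<bar>" "u \<noteq> b"
  shows "\<bar>a - (u + sgn (b - u))\<bar> + \<bar>(u + sgn (b - u)) - b\<bar> = \<bar>a - b\<bar>"
proof (cases "u < b")
  case True
  then have "sgn (b - u) = 1"
    by simp
  then show ?thesis
    using assms True by arith
next
  case False
  then have "sgn (b - u) = -1"
    using assms(2) by simp
  then show ?thesis
    using assms False by arith
qed

lemma l1_between_step_towards:
  fixes a b u :: "int ^ 'n"
  assumes "l1_between a b u" "u \<noteq> b"
  shows "l1_between a b (step_towards b u)"
proof -
  obtain k where k: "u $ k \<noteq> b $ k"
    and w: "step_towards b u = (\<chi> i. if i = k then u $ i + sgn (b $ i - u $ i) else u $ i)"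
    using step_towards_eq[OF assms(2)] by metis
  show ?thesis
    using assms(1) int_step_towards_between[OF _ k] unfolding l1_between_def w by auto
qed

lemma l1_between_l1_dist_le:
  assumes "l1_between a b u" "l1_between a b v"
  shows "l1_dist u v \<le> l1_dist a b"
  unfolding l1_dist_def
proof (rule sum_mono)
  fix i
  have "\<bar>a $ i - u $ i\<bar> + \<bar>u $ i - b $ i\<bar> = \<bar>a $ i - b $ i\<bar>"
    "\<bar>a $ i - v $ i\<bar> + \<bar>v $ i - b $ i\<bar> = \<bar>a $ i - b $ i\<bar>"
    using assms unfolding l1_between_def by blast+
  then show "\<bar>u $ i - v $ i\<bar> \<le> \<bar>a $ i - b $ i\<bar>"
    by arith
qed

lemma lattice_walk_0 [simp]: "lattice_walk a b 0 = a"
  unfolding lattice_walk_def by simp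

lemma lattice_walk_Suc: "lattice_walk a b (Suc i) = step_towards b (lattice_walk a b i)"
  unfolding lattice_walk_def by simp

lemma l1_between_lattice_walk: "l1_between a b (lattice_walk a b i)"
proof (induction i)
  case 0
  show ?case
    unfolding l1_between_def by simp
next
  case (Suc i)
  then show ?case
    unfolding lattice_walk_Suc
    by (cases "lattice_walk a b i = b") (simp_all add: l1_between_step_towards)
qed

lemma l1_dist_lattice_walk: "l1_dist (lattice_walk a b i) b = max 0 (l1_dist a b - int i)"
proof (induction i)
  case 0
  then show ?case
    using l1_dist_nonneg[of a b] by simp
next
  case (Suc i)
  show ?case
  proof (cases "lattice_walk a b i = b")
    case True
    then show ?thesis
      using Suc unfolding lattice_walk_Suc by simp
  next
    case False
    then have "l1_dist (lattice_walk a b i) b \<noteq> 0"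
      by (simp add: l1_dist_eq_0_iff)
    then show ?thesis
      using Suc l1_dist_step_towards(1)[OF False] unfolding lattice_walk_Suc by simp
  qed
qed

lemma lattice_walk_arrives: "l1_dist a b \<le> int i \<Longrightarrow> lattice_walk a b i = b"
  using l1_dist_lattice_walk[of a b i] l1_dist_eq_0_iff by fastforce

lemma l1_dist_lattice_walk_Suc: "l1_dist (lattice_walk a b i) (lattice_walk a b (Suc i)) \<le> 1"
  unfolding lattice_walk_Suc
  by (cases "lattice_walk a b i = b") (simp_all add: l1_dist_step_towards(2))

text \<open>Each edge of \<open>c\<close> becomes \<open>L\<close> steps of a lattice walk, which reach the next vertex only
  if the edge has length at most \<open>L\<close>.\<close>

definition subdivide :: "nat \<Rightarrow> (nat \<Rightarrow> int ^ 'n) \<Rightarrow> nat \<Rightarrow> int ^ 'n" where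
  "subdivide L c m = lattice_walk (c (m div L)) (c (Suc (m div L))) (m mod L)"

lemma subdivide_Suc:
  assumes "0 < L" "l1_dist (c (m div L)) (c (Suc (m div L))) \<le> int L"
  shows "subdivide L c (Suc m) = lattice_walk (c (m div L)) (c (Suc (m div L))) (Suc (m mod L))"
proof (cases "Suc (m mod L) = L")
  case True
  then have "Suc m mod L = 0" "Suc m div L = Suc (m div L)"
    by (simp_all add: mod_Suc div_Suc)
  then show ?thesis
    unfolding subdivide_def using True assms(2) by (simp add: lattice_walk_arrives)
next
  case False
  then have "Suc m mod L = Suc (m mod L)" "Suc m div L = m div L"
    by (simp_all add: mod_Suc div_Suc)
  then show ?thesis
    unfolding subdivide_def by simp
qed

lemma subdivide_closed: "0 < L \<Longrightarrow> c N = c 0 \<Longrightarrow> subdivide L c (N * L) = subdivide L c 0"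
  unfolding subdivide_def by simp

lemma l1_dist_subdivide_Suc:
  assumes "0 < L" "m < N * L" "\<And>j. j < N \<Longrightarrow> l1_dist (c j) (c (Suc j)) \<le> int L"
  shows "l1_dist (subdivide L c m) (subdivide L c (Suc m)) \<le> 1"
proof -
  have "m div L < N"
    using assms(2) by (simp add: less_mult_imp_div_less)
  show ?thesis
    unfolding subdivide_Suc[OF assms(1) assms(3)[OF \<open>m div L < N\<close>]] unfolding subdivide_def
    by (rule l1_dist_lattice_walk_Suc)
qed

lemma freely_homotopic_subdivide:
  assumes "0 < N" "0 < L" "c N = c 0"
    and short: "\<And>j. j < N \<Longrightarrow> real_of_int (l1_dist (c j) (c (Suc j))) \<le> r"
    and le_L: "\<And>j. j < N \<Longrightarrow> l1_dist (c j) (c (Suc j)) \<le> int L"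
  shows "freely_homotopic_loops (realization (VR_lattice r))
           (edge_path (N * L) (\<lambda>m. c (m div L))) (edge_path (N * L) (subdivide L c))"
proof (rule freely_homotopic_edge_paths)
  show "0 < N * L" "c (N * L div L) = c (0 div L)" "subdivide L c (N * L) = subdivide L c 0"
    using assms(1-3) by (simp_all add: subdivide_closed)
  fix m assume "m < N * L"
  define j where "j = m div L"
  have "j < N"
    unfolding j_def using \<open>m < N * L\<close> by (simp add: less_mult_imp_div_less)
  let ?\<sigma> = "{c (m div L), c (Suc m div L), subdivide L c m, subdivide L c (Suc m)}"
  have walk: "subdivide L c m = lattice_walk (c j) (c (Suc j)) (m mod L)"
    unfolding subdivide_def j_def ..
  have walk_Suc: "subdivide L c (Suc m) = lattice_walk (c j) (c (Suc j)) (Suc (m mod L))"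
    unfolding j_def using assms(2) le_L[OF \<open>j < N\<close>[unfolded j_def]] by (rule subdivide_Suc)
  have "Suc m div L = j \<or> Suc m div L = Suc j"
    unfolding j_def by (simp add: div_Suc)
  then have \<sigma>: "?\<sigma> \<subseteq> {c j, c (Suc j), lattice_walk (c j) (c (Suc j)) (m mod L),
      lattice_walk (c j) (c (Suc j)) (Suc (m mod L))}"
    using walk walk_Suc unfolding j_def by auto
  have ends: "l1_between (c j) (c (Suc j)) (c j)" "l1_between (c j) (c (Suc j)) (c (Suc j))"
    unfolding l1_between_def by simp_all
  have between: "l1_between (c j) (c (Suc j)) u" if "u \<in> ?\<sigma>" for u
    using subsetD[OF \<sigma> that] ends l1_between_lattice_walk[of "c j" "c (Suc j)"]
    by (elim insertE emptyE) simp_all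
  have "real_of_int (l1_dist u v) \<le> r" if "u \<in> ?\<sigma>" "v \<in> ?\<sigma>" for u v
    using l1_between_l1_dist_le[OF between[OF that(1)] between[OF that(2)]] short[OF \<open>j < N\<close>]
    by linarith
  then show "?\<sigma> \<in> VR_lattice r"
    unfolding mem_VR_lattice by simp
qed

section \<open>Contracting loops\<close>

definition shrink :: "'n \<Rightarrow> int ^ 'n \<Rightarrow> int ^ 'n" where
  "shrink i u = (\<chi> k. if k = i then u $ k - sgn (u $ k) else u $ k)"

lemma shrink_nth: "shrink i u $ k = (if k = i then u $ k - sgn (u $ k) else u $ k)"
  unfolding shrink_def by simp

lemma l1_dist_shrink_le: "l1_dist (shrink i u) (shrink i v) \<le> l1_dist u v"
  unfolding l1_dist_def shrink_nth by (intro sum_mono) (auto simp: sgn_if)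

lemma l1_dist_shrink_self: "l1_dist u (shrink i u) \<le> 1"
proof -
  have "l1_dist u (shrink i u) = (\<Sum>k\<in>UNIV. if k = i then \<bar>sgn (u $ i)\<bar> else 0)"
    unfolding l1_dist_def shrink_nth by (intro sum.cong) auto
  also have "\<dots> \<le> 1"
    by (simp add: abs_sgn_eq)
  finally show ?thesis .
qed

lemma l1_dist_shrink_square:
  assumes "l1_dist a b \<le> 1"
    and "u \<in> {a, b, shrink i a, shrink i b}" "v \<in> {a, b, shrink i a, shrink i b}"
  shows "l1_dist u v \<le> 2"
proof -
  have "l1_dist a (shrink i a) \<le> 1" "l1_dist b (shrink i b) \<le> 1"
    by (rule l1_dist_shrink_self)+
  moreover have "l1_dist (shrink i a) (shrink i b) \<le> 1"
    using l1_dist_shrink_le[of i a b] assms(1) by linarith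
  moreover have "l1_dist a (shrink i b) \<le> 2" "l1_dist b (shrink i a) \<le> 2"
    using l1_dist_triangle[of a "shrink i b" b] l1_dist_triangle[of b "shrink i a" a]
      l1_dist_shrink_self[of a i] l1_dist_shrink_self[of b i] assms(1) l1_dist_commute[of a b]
    by linarith+
  ultimately show ?thesis
    using assms by (auto simp: l1_dist_commute)
qed

definition walk_weight :: "nat \<Rightarrow> (nat \<Rightarrow> int ^ 'n) \<Rightarrow> nat" where
  "walk_weight M y = (\<Sum>m\<le>M. \<Sum>k\<in>UNIV. nat \<bar>y m $ k\<bar>)"

lemma walk_weight_shrink_less:
  assumes "m0 \<le> M" "y m0 $ i \<noteq> 0"
  shows "walk_weight M (shrink i \<circ> y) < walk_weight M y"
proof -
  have le: "nat \<bar>shrink i u $ k\<bar> \<le> nat \<bar>u $ k\<bar>" for u k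
    unfolding shrink_nth by (auto simp: sgn_if)
  have "nat \<bar>shrink i (y m0) $ i\<bar> < nat \<bar>y m0 $ i\<bar>"
    using assms(2) unfolding shrink_nth by (auto simp: sgn_if)
  then have "(\<Sum>k\<in>UNIV. nat \<bar>shrink i (y m0) $ k\<bar>) < (\<Sum>k\<in>UNIV. nat \<bar>y m0 $ k\<bar>)"
    using le by (intro sum_strict_mono_ex1) auto
  then show ?thesis
    unfolding walk_weight_def using le assms(1)
    by (intro sum_strict_mono_ex1) (auto intro: sum_mono)
qed

lemma freely_homotopic_shrink:
  assumes "2 \<le> r" "0 < M" "y M = y 0" and unit: "\<And>m. m < M \<Longrightarrow> l1_dist (y m) (y (Suc m)) \<le> 1"
  shows "freely_homotopic_loops (realization (VR_lattice r))
           (edge_path M y) (edge_path M (shrink i \<circ> y))"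
proof (rule freely_homotopic_edge_paths)
  fix m assume "m < M"
  show "{y m, y (Suc m), (shrink i \<circ> y) m, (shrink i \<circ> y) (Suc m)} \<in> VR_lattice r"
    using l1_dist_shrink_square[OF unit[OF \<open>m < M\<close>]] \<open>2 \<le> r\<close>
    by (intro VR_lattice_memI[where k = 2]) auto
qed (use assms in simp_all)

lemma freely_homotopic_edge_path_origin:
  fixes y :: "nat \<Rightarrow> int ^ 'n"
  assumes "0 \<le> r" "0 < M" and zero: "\<And>m. m \<le> M \<Longrightarrow> y m = 0"
  shows "freely_homotopic_loops (realization (VR_lattice r)) (edge_path M y) (\<lambda>t. vertex 0)"
proof (rule freely_homotopic_loops_straight_line)
  show "edge_path M y 1 = edge_path M y 0"
    using assms(2) zero by (simp add: edge_path_closed)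
  show "finite {0 :: int ^ 'n}"
    by simp
  have "{0} \<in> VR_lattice r"
    using assms(1) by (intro VR_lattice_memI[where k = 0]) auto
  fix t :: real assume "t \<in> {0..1}"
  then obtain m where m: "m < M" "t \<in> slot M m"
    using slot_cover[OF \<open>0 < M\<close>] by blast
  then have "edge_path M y t \<in> closed_simplex {0}"
    using zero by (intro edge_path_in_closed_simplex) auto
  moreover have "vertex 0 \<in> closed_simplex {0 :: int ^ 'n}"
    by (simp add: vertex_in_closed_simplex)
  ultimately show "\<exists>\<sigma>\<in>VR_lattice r. \<sigma> \<subseteq> {0} \<and>
      edge_path M y t \<in> closed_simplex \<sigma> \<and> vertex 0 \<in> closed_simplex \<sigma>"
    using \<open>{0} \<in> VR_lattice r\<close> by blast
qed (simp_all add: continuous_on_edge_path)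

lemma freely_homotopic_unit_walk_origin:
  fixes y :: "nat \<Rightarrow> int ^ 'n"
  assumes "2 \<le> r" "0 < M" "y M = y 0" "\<And>m. m < M \<Longrightarrow> l1_dist (y m) (y (Suc m)) \<le> 1"
  shows "freely_homotopic_loops (realization (VR_lattice r)) (edge_path M y) (\<lambda>t. vertex 0)"
  using assms(3,4)
proof (induction "walk_weight M y" arbitrary: y rule: less_induct)
  case less
  show ?case
  proof (cases "\<forall>m\<le>M. y m = 0")
    case True
    then show ?thesis
      using assms(1,2) by (intro freely_homotopic_edge_path_origin) auto
  next
    case False
    then obtain m0 i where "m0 \<le> M" "y m0 $ i \<noteq> 0"
      by (metis vec_eq_iff zero_index)
    then have "walk_weight M (shrink i \<circ> y) < walk_weight M y"
      by (rule walk_weight_shrink_less)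
    moreover have "(shrink i \<circ> y) M = (shrink i \<circ> y) 0"
      using less.prems(1) by simp
    moreover have "l1_dist ((shrink i \<circ> y) m) ((shrink i \<circ> y) (Suc m)) \<le> 1" if "m < M" for m
      using l1_dist_shrink_le[of i "y m" "y (Suc m)"] less.prems(2)[OF that] by simp
    ultimately have "freely_homotopic_loops (realization (VR_lattice r))
        (edge_path M (shrink i \<circ> y)) (\<lambda>t. vertex 0)"
      by (rule less.hyps)
    with freely_homotopic_shrink[OF assms(1,2) less.prems] show ?thesis
      by (rule homotopic_with_trans)
  qed
qed

declare homotopic_with_trans [trans]

lemma freely_homotopic_short_edge_loop_origin:
  fixes c :: "nat \<Rightarrow> int ^ 'n"
  assumes "2 \<le> r" "0 < N" "c N = c 0"
    and short: "\<And>j. j < N \<Longrightarrow> real_of_int (l1_dist (c j) (c (Suc j))) \<le> r"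
  defines "L \<equiv> nat \<lfloor>r\<rfloor>"
  shows "freely_homotopic_loops (realization (VR_lattice r))
           (edge_path (N * L) (\<lambda>m. c (m div L))) (\<lambda>t. vertex 0)"
proof -
  have "0 < L"
    unfolding L_def using assms(1) by simp
  have le_L: "l1_dist (c j) (c (Suc j)) \<le> int L" if "j < N" for j
    using short[OF that] assms(1) unfolding L_def by (simp add: le_floor_iff)
  have "freely_homotopic_loops (realization (VR_lattice r))
      (edge_path (N * L) (\<lambda>m. c (m div L))) (edge_path (N * L) (subdivide L c))"
    using assms(2) \<open>0 < L\<close> assms(3) short le_L by (rule freely_homotopic_subdivide)
  also have "freely_homotopic_loops (realization (VR_lattice r)) \<dots> (\<lambda>t. vertex 0)"
  proof (rule freely_homotopic_unit_walk_origin)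
    show "2 \<le> r" "0 < N * L"
      using assms(1,2) \<open>0 < L\<close> by simp_all
    show "subdivide L c (N * L) = subdivide L c 0"
      using \<open>0 < L\<close> assms(3) by (rule subdivide_closed)
    show "l1_dist (subdivide L c m) (subdivide L c (Suc m)) \<le> 1" if "m < N * L" for m
      using \<open>0 < L\<close> that le_L by (rule l1_dist_subdivide_Suc)
  qed
  finally show ?thesis .
qed

lemma freely_homotopic_loop_origin_VR_lattice:
  assumes "2 \<le> r" and p: "pathin (realization (VR_lattice r)) p" and "p 1 = p 0"
  shows "freely_homotopic_loops (realization (VR_lattice r)) p (\<lambda>t. vertex (0 :: int ^ 'n))"
proof -
  obtain N c where approx: "star_approx p N c"
    using star_approx_exists[OF p \<open>p 1 = p 0\<close>] by metis
  then have "0 < N" "c N = c 0"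
    unfolding star_approx_def by auto
  define L where "L = nat \<lfloor>r\<rfloor>"
  have "0 < L"
    unfolding L_def using assms(1) by simp
  have "freely_homotopic_loops (realization (VR_lattice r)) p (edge_path (N * L) (\<lambda>m. c (m div L)))"
    using VR_lattice_locally_finite p \<open>p 1 = p 0\<close> star_approx_stretch[OF approx \<open>0 < L\<close>]
    by (rule freely_homotopic_star_approx_edge_path)
  also have "freely_homotopic_loops (realization (VR_lattice r)) \<dots> (\<lambda>t. vertex 0)"
    unfolding L_def using assms(1) \<open>0 < N\<close> \<open>c N = c 0\<close> star_approx_VR_lattice_step[OF p approx]
    by (rule freely_homotopic_short_edge_loop_origin)
  finally show ?thesis .
qed

section \<open>Path-connectedness\<close>

lemma vertex_in_topspace_realization:
  "{v} \<in> K \<Longrightarrow> vertex v \<in> topspace (realization K)"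
  unfolding topspace_realization realization_carrier_def
  using vertex_in_closed_simplex[of "{v}" v] by blast

lemma path_component_of_vertices:
  assumes "\<sigma> \<in> K" "finite \<sigma>" "u \<in> \<sigma>" "w \<in> \<sigma>"
  shows "path_component_of (realization K) (vertex u) (vertex w)"
  unfolding path_component_of_def
  using pathin_realization_segment[OF assms(1) vertex_in_closed_simplex[OF assms(2,3)]
      vertex_in_closed_simplex[OF assms(2,4)]]
  by (intro exI[of _ "\<lambda>t. convex_comb t (vertex u) (vertex w)"]) simp

lemma path_component_of_some_vertex:
  assumes "\<alpha> \<in> topspace (realization K)"
  obtains v where "path_component_of (realization K) \<alpha> (vertex v)"
proof -
  obtain \<sigma> v where \<sigma>: "\<sigma> \<in> K" "\<alpha> \<in> closed_simplex \<sigma>" "v \<in> \<sigma>"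
    using realization_carrier_obtains_vertex assms unfolding topspace_realization by metis
  have "pathin (realization K) (\<lambda>t. convex_comb t \<alpha> (vertex v))"
    using pathin_realization_segment[OF \<sigma>(1,2)
        vertex_in_closed_simplex[OF closed_simplex_imp_finite[OF \<sigma>(2)] \<sigma>(3)]] .
  then have "path_component_of (realization K) \<alpha> (vertex v)"
    unfolding path_component_of_def by (intro exI[of _ "\<lambda>t. convex_comb t \<alpha> (vertex v)"]) simp
  then show thesis
    by (rule that)
qed

lemma path_component_of_VR_lattice_vertices:
  assumes "1 \<le> r"
  shows "path_component_of (realization (VR_lattice r)) (vertex a) (vertex b)"
proof -
  have "path_component_of (realization (VR_lattice r)) (vertex a) (vertex (lattice_walk a b i))"
    for i
  proof (induction i)
    case 0
    have "{a} \<in> VR_lattice r"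
      using assms by (intro VR_lattice_memI[where k = 0]) auto
    then show ?case
      by (simp add: path_component_of_refl vertex_in_topspace_realization)
  next
    case (Suc i)
    have "{lattice_walk a b i, lattice_walk a b (Suc i)} \<in> VR_lattice r"
      using assms l1_dist_lattice_walk_Suc[of a b i] l1_dist_commute[of "lattice_walk a b (Suc i)"]
      by (intro VR_lattice_memI[where k = 1]) auto
    then have "path_component_of (realization (VR_lattice r))
        (vertex (lattice_walk a b i)) (vertex (lattice_walk a b (Suc i)))"
      by (rule path_component_of_vertices) auto
    with Suc.IH show ?case
      by (rule path_component_of_trans)
  qed
  moreover have "lattice_walk a b (nat (l1_dist a b)) = b"
    by (rule lattice_walk_arrives) (simp add: l1_dist_nonneg)
  ultimately show ?thesis
    by metis
qed

lemma path_connected_VR_lattice: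
  assumes "1 \<le> r"
  shows "path_connected_space (realization (VR_lattice r :: (int ^ 'n) set set))"
  unfolding path_connected_space_iff_path_component
proof (intro ballI)
  fix \<alpha> \<beta>
  assume "\<alpha> \<in> topspace (realization (VR_lattice r :: (int ^ 'n) set set))"
    and "\<beta> \<in> topspace (realization (VR_lattice r :: (int ^ 'n) set set))"
  then obtain v w :: "int ^ 'n" where
    v: "path_component_of (realization (VR_lattice r)) \<alpha> (vertex v)" and
    w: "path_component_of (realization (VR_lattice r)) \<beta> (vertex w)"
    by (metis path_component_of_some_vertex)
  have "path_component_of (realization (VR_lattice r)) \<alpha> (vertex w)"
    using v path_component_of_VR_lattice_vertices[OF assms] by (rule path_component_of_trans)
  then show "path_component_of (realization (VR_lattice r)) \<alpha> \<beta>"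
    using path_component_of_sym[OF w] by (rule path_component_of_trans)
qed

lemma freely_homotopic_constant_loops:
  assumes "pathin X g"
  shows "freely_homotopic_loops X (\<lambda>t. g 0) (\<lambda>t. g 1)"
  unfolding homotopic_with_def
proof (intro exI conjI allI ballI)
  show "continuous_map (prod_topology (top_of_set {0..1}) (top_of_set {0..1})) X (g \<circ> fst)"
    using continuous_map_compose[OF continuous_map_fst assms[unfolded pathin_def]] .
qed simp_all

theorem theorem4p14:
  fixes r :: real
  assumes "r \<ge> 2"
  shows "simply_connected_space
           (realization (VR_complex (manhattan :: int ^ 'n \<Rightarrow> int ^ 'n \<Rightarrow> real) UNIV r))"
  unfolding simply_connected_space_def
proof (intro conjI allI impI)
  show connected: "path_connected_space (realization (VR_lattice r :: (int ^ 'n) set set))"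
    using assms by (intro path_connected_VR_lattice) simp
  fix p :: "real \<Rightarrow> int ^ 'n \<Rightarrow> real"
  assume "pathin (realization (VR_lattice r)) p \<and> p 1 = p 0"
  then have p: "pathin (realization (VR_lattice r)) p" and "p 1 = p 0"
    by auto
  have "vertex 0 \<in> topspace (realization (VR_lattice r))"
    using assms by (intro vertex_in_topspace_realization VR_lattice_memI[where k = 0]) auto
  moreover have "p 0 \<in> topspace (realization (VR_lattice r))"
    using p unfolding pathin_def continuous_map_def by auto
  ultimately obtain g where g: "pathin (realization (VR_lattice r)) g" "g 0 = vertex 0" "g 1 = p 0"
    using connected unfolding path_connected_space_iff_path_component path_component_of_def by blast
  have "freely_homotopic_loops (realization (VR_lattice r)) p (\<lambda>t. vertex 0)"
    using assms p \<open>p 1 = p 0\<close> by (intro freely_homotopic_loop_origin_VR_lattice) simp_all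
  also have "freely_homotopic_loops (realization (VR_lattice r)) \<dots> (\<lambda>t. p 0)"
    using freely_homotopic_constant_loops[OF g(1)] g(2,3) by simp
  finally show "freely_homotopic_loops (realization (VR_lattice r)) p (\<lambda>t. p 0)" .
qed

end
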